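(* Let $X$ be a mixed-stable sequence with respect to a full BST $T$. For every leaf $u$ of $T$ there are non-negative integers $a(u),b(u)$ such that the queries to $u$ occur exactly once every $2^{a(u)}3^{b(u)}$ consecutive queries of $X$. Consequently, the length of the atomic sequence of $X$ is $$2^{\max_u a(u)}\cdot 3^{\max_u b(u)},$$ the maxima being over leaves $u$. Moreover, if $X$ is strongly-stable then $b(u)=0$ for all leaves $u$, and if $X$ is weakly-stable then $a(u)=0$ for all leaves $u$.
   Context: Stable sequences. Let $T$ be a full binary search tree (every inner node has exactly two children), and let $X$ be a query sequence consisting only of keys stored at leaves of $T$. For an inner node $v$, let $X_v$ be the subsequence of $X$ consisting of the queries to keys in the subtree of $v$. - The node $v$ is strongly-stable if consecutive queries of $X_v$ alternate between the left and right subtrees of $v$. - The node $v$ is weakly-stable with a left bias if its left child $u$ is an inner node and $X_v$ repeats cyclically (from some starting phase) the pattern: a query in the left subtree of $u$, then one in the right subtree of $u$, then one in the right subtree of $v$. - Weakly-stable with a right bias is the mirror image: $u$ is the right child of $v$, and the pattern is right subtree of $u$, left subtree of $u$, left subtree of $v$. In both weakly-stable cases $u$ is called the favored child of $v$. $X$ (and $T$) is mixed-stable if every inner node of $T$ is strongly-stable or weakly-stable. It is strongly-stable if every inner node is strongly-stable, and weakly-stable if exactly half of the inner nodes are weakly-stable. Given $T$, the stability type of each inner node, and the subtree each node's pattern starts with, the stable sequence is determined up to its length. Its atomic sequence is the shortest such sequence all of whose repetitions are again such stable sequences. *)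

theory Defs
  imports Main "HOL-Library.Sublist"
begin

text \<open>Nodes are addressed by paths from the root (False = go left, True = go right).
  Keys are stored at leaves, so a key is identified with the path of its leaf.\<close>

datatype fbt = Leaf | Node fbt fbt

fun leaves :: "fbt \<Rightarrow> bool list set" where
  "leaves Leaf = {[]}"
| "leaves (Node l r) = Cons False ` leaves l \<union> Cons True ` leaves r"

fun inners :: "fbt \<Rightarrow> bool list set" where
  "inners Leaf = {}"
| "inners (Node l r) = {[]} \<union> Cons False ` inners l \<union> Cons True ` inners r"

definition query_seq :: "fbt \<Rightarrow> (nat \<Rightarrow> bool list) \<Rightarrow> bool" where
  "query_seq T X \<longleftrightarrow> (\<forall>i. X i \<in> leaves T)"

definition consec :: "(nat \<Rightarrow> bool list) \<Rightarrow> bool list \<Rightarrow> nat \<Rightarrow> nat \<Rightarrow> bool" where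
  "consec X v i j \<longleftrightarrow> i < j \<and> prefix v (X i) \<and> prefix v (X j) \<and>
     (\<forall>k. i < k \<and> k < j \<longrightarrow> \<not> prefix v (X k))"

definition strongly_stable_node :: "(nat \<Rightarrow> bool list) \<Rightarrow> bool list \<Rightarrow> bool" where
  "strongly_stable_node X v \<longleftrightarrow>
     (\<forall>i j. consec X v i j \<longrightarrow>
        (prefix (v @ [False]) (X i) \<longleftrightarrow> prefix (v @ [True]) (X j)))"

definition cyclic3 :: "(nat \<Rightarrow> bool list) \<Rightarrow> bool list \<Rightarrow> bool list \<Rightarrow> bool list \<Rightarrow> bool list \<Rightarrow> bool" where
  "cyclic3 X v p0 p1 p2 \<longleftrightarrow>
     (\<forall>i j. consec X v i j \<longrightarrow>
        (prefix (v @ p0) (X i) \<longrightarrow> prefix (v @ p1) (X j)) \<and>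
        (prefix (v @ p1) (X i) \<longrightarrow> prefix (v @ p2) (X j)) \<and>
        (prefix (v @ p2) (X i) \<longrightarrow> prefix (v @ p0) (X j)))"

definition weakly_stable_left :: "fbt \<Rightarrow> (nat \<Rightarrow> bool list) \<Rightarrow> bool list \<Rightarrow> bool" where
  "weakly_stable_left T X v \<longleftrightarrow>
     v @ [False] \<in> inners T \<and> cyclic3 X v [False, False] [False, True] [True]"

definition weakly_stable_right :: "fbt \<Rightarrow> (nat \<Rightarrow> bool list) \<Rightarrow> bool list \<Rightarrow> bool" where
  "weakly_stable_right T X v \<longleftrightarrow>
     v @ [True] \<in> inners T \<and> cyclic3 X v [True, True] [True, False] [False]"

definition weakly_stable_node :: "fbt \<Rightarrow> (nat \<Rightarrow> bool list) \<Rightarrow> bool list \<Rightarrow> bool" where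
  "weakly_stable_node T X v \<longleftrightarrow> weakly_stable_left T X v \<or> weakly_stable_right T X v"

definition mixed_stable :: "fbt \<Rightarrow> (nat \<Rightarrow> bool list) \<Rightarrow> bool" where
  "mixed_stable T X \<longleftrightarrow> query_seq T X \<and>
     (\<forall>v \<in> inners T. strongly_stable_node X v \<or> weakly_stable_node T X v)"

definition strongly_stable :: "fbt \<Rightarrow> (nat \<Rightarrow> bool list) \<Rightarrow> bool" where
  "strongly_stable T X \<longleftrightarrow> query_seq T X \<and> (\<forall>v \<in> inners T. strongly_stable_node X v)"

definition weakly_stable :: "fbt \<Rightarrow> (nat \<Rightarrow> bool list) \<Rightarrow> bool" where
  "weakly_stable T X \<longleftrightarrow> mixed_stable T X \<and>
     2 * card {v \<in> inners T. weakly_stable_node T X v} = card (inners T)"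

definition once_every :: "(nat \<Rightarrow> bool list) \<Rightarrow> bool list \<Rightarrow> nat \<Rightarrow> bool" where
  "once_every X u p \<longleftrightarrow> (\<forall>i. card {j. i \<le> j \<and> j < i + p \<and> X j = u} = 1)"

text \<open>Length of the atomic sequence: the shortest prefix w of X such that every
  repetition w^k is again the (same) stable sequence, i.e. a prefix of X;
  equivalently the least positive period of X.\<close>
definition atomic_length :: "(nat \<Rightarrow> bool list) \<Rightarrow> nat" where
  "atomic_length X = (LEAST n. 0 < n \<and> (\<forall>k i. i < k * n \<longrightarrow> X i = X (i mod n)))"

end

theory Submission
  imports Defs "HOL-Number_Theory.Cong"
begin

text \<open>If the queries to the subtree of an inner node v are exactly the positions
  congruent to r modulo p, then strong stability of v gives each child of v the positions
  of every second one of them (period 2p), and weak stability of v with favored child u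
  gives each of the three subtrees of the cyclic pattern every third one (period 3p).
  The favored child u is itself not queried periodically, but the pattern forces it to be
  strongly stable, and its children are two of the three pattern subtrees. Starting from
  the root (period 1), every leaf is therefore queried with a period 2^a 3^b, with one
  factor 2 per strong and one factor 3 per weak step on its path, and the atomic length
  is the lcm of these periods. If exactly half of the inner nodes are weakly stable, the
  injection from weakly stable nodes to their favored children is a bijection onto the
  remaining inner nodes, so no strong step occurs.\<close>

section \<open>Arithmetic of residues\<close>

lemma add_mod_eq_iff:
  fixes c x s m :: nat
  assumes "s < m"
  shows "(c + x) mod m = s \<longleftrightarrow> x mod m = (s + m - c mod m) mod m"
proof -
  define t where "t = (s + m - c mod m) mod m"
  have "(t + c) mod m = (s + m - c mod m + c mod m) mod m"
    unfolding t_def by (metis mod_add_eq mod_mod_trivial)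
  also have "\<dots> = (s + m) mod m"
    using assms mod_less_divisor[of m c] by (simp add: less_imp_le_nat trans_le_add2)
  also have "\<dots> = s" using assms by simp
  finally have "(c + x) mod m = s \<longleftrightarrow> [x + c = t + c] (mod m)"
    by (simp add: cong_def add.commute)
  also have "\<dots> \<longleftrightarrow> [x = t] (mod m)" by (rule cong_add_rcancel_nat)
  also have "\<dots> \<longleftrightarrow> x mod m = t" by (simp add: cong_def t_def)
  finally show ?thesis unfolding t_def .
qed

lemma mod_mult_residue_exists:
  fixes p r m s c :: nat
  assumes "r < p" "s < m"
  shows "\<exists>r' < m * p. \<forall>j. (j mod p = r \<and> (c + j div p) mod m = s) \<longleftrightarrow> j mod (m * p) = r'"
proof (intro exI conjI allI)
  define t where "t = (s + m - c mod m) mod m"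
  have t: "t < m" using assms(2) by (simp add: t_def)
  then have "p * t + p \<le> p * m" by (metis mult_Suc_right mult_le_mono2 Suc_leI add.commute plus_1_eq_Suc)
  then show "r + p * t < m * p" using assms(1) by (simp add: mult.commute)
  fix j
  have "j mod (m * p) = p * (j div p mod m) + j mod p"
    using mod_mult2_eq[of j p m] by (simp add: mult.commute)
  moreover have "p * (j div p mod m) + j mod p = r + p * t \<longleftrightarrow> j mod p = r \<and> j div p mod m = t"
  proof
    assume h: "p * (j div p mod m) + j mod p = r + p * t"
    then have "(p * (j div p mod m) + j mod p) mod p = (r + p * t) mod p" by simp
    then have "j mod p = r" using assms(1) by simp
    with h show "j mod p = r \<and> j div p mod m = t" using assms(1) by simp
  qed auto
  ultimately show "(j mod p = r \<and> (c + j div p) mod m = s) \<longleftrightarrow> j mod (m * p) = r + p * t"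
    using add_mod_eq_iff[OF assms(2)] t_def by auto
qed

lemma eq_if_mod_eq_window:
  fixes i j k p :: nat
  assumes "j mod p = k mod p" "i \<le> j" "j < i + p" "i \<le> k" "k < i + p"
  shows "j = k"
proof -
  have "a = b" if "a mod p = b mod p" "a \<le> b" "b - a < p" for a b :: nat
    using that mod_eq_dvd_iff_nat[of a b p] nat_dvd_not_less[of "b - a" p] by auto
  moreover have "j \<le> k \<Longrightarrow> k - j < p" "k \<le> j \<Longrightarrow> j - k < p" using assms(2-5) by linarith+
  ultimately show ?thesis using assms(1) by (metis nat_le_linear)
qed

lemma residue_in_window:
  fixes i p r :: nat
  assumes "r < p"
  shows "(i + (r + p - i mod p) mod p) mod p = r"
  using add_mod_eq_iff assms mod_mod_trivial by blast

lemma card_residue_window: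
  fixes i p r :: nat
  assumes "r < p"
  shows "card {j. i \<le> j \<and> j < i + p \<and> j mod p = r} = 1"
proof -
  define e where "e = i + (r + p - i mod p) mod p"
  have e: "i \<le> e" "e < i + p" "e mod p = r"
    using residue_in_window[OF assms] assms unfolding e_def by auto
  have "j = e" if "i \<le> j" "j < i + p" "j mod p = r" for j
    using eq_if_mod_eq_window[of j p e i] that e by simp
  with e have "{j. i \<le> j \<and> j < i + p \<and> j mod p = r} = {e}" by blast
  then show ?thesis by simp
qed

lemma Lcm_powers_two_three:
  assumes "finite A" "A \<noteq> {}"
  shows "Lcm ((\<lambda>u. 2 ^ a u * 3 ^ b u :: nat) ` A) = 2 ^ Max (a ` A) * 3 ^ Max (b ` A)"
proof (rule Lcm_eqI)
  show "normalize (2 ^ Max (a ` A) * 3 ^ Max (b ` A)) = (2 ^ Max (a ` A) * 3 ^ Max (b ` A) :: nat)"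
    by simp
next
  fix x assume "x \<in> (\<lambda>u. 2 ^ a u * 3 ^ b u :: nat) ` A"
  then obtain u where "u \<in> A" "x = 2 ^ a u * 3 ^ b u" by blast
  moreover from \<open>u \<in> A\<close> have "a u \<le> Max (a ` A)" "b u \<le> Max (b ` A)" using assms(1) by simp_all
  ultimately show "x dvd 2 ^ Max (a ` A) * 3 ^ Max (b ` A)" by (simp add: mult_dvd_mono le_imp_power_dvd)
next
  fix c assume c: "\<And>x. x \<in> (\<lambda>u. 2 ^ a u * 3 ^ b u :: nat) ` A \<Longrightarrow> x dvd c"
  have "Max (a ` A) \<in> a ` A" "Max (b ` A) \<in> b ` A" using assms by simp_all
  then obtain u v where u: "u \<in> A" "a u = Max (a ` A)" and v: "v \<in> A" "b v = Max (b ` A)"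
    by (metis imageE)
  have "2 ^ a u * 3 ^ b u dvd c" "2 ^ a v * 3 ^ b v dvd c" using c u(1) v(1) by blast+
  then have "2 ^ a u dvd c" "3 ^ b v dvd c" using dvd_mult_left dvd_mult_right by blast+
  then show "2 ^ Max (a ` A) * 3 ^ Max (b ` A) dvd c" using u(2) v(2) by (simp add: divides_mult)
qed

section \<open>Prefixes and full binary trees\<close>

lemma prefix_snoc_eq: "prefix (w @ [a]) u \<Longrightarrow> prefix (w @ [b]) u \<Longrightarrow> a = b"
  by (auto simp: prefix_def)

lemma prefix_snoc_snocD: "prefix (w @ [a, b]) u \<Longrightarrow> prefix (w @ [a]) u"
  using append_prefixD[of "w @ [a]" "[b]" u] by simp

lemma prefix_alternate:
  "prefix (w @ [a]) u \<Longrightarrow> prefix (w @ [\<not> a]) u' \<Longrightarrow> prefix (w @ [False]) u \<longleftrightarrow> prefix (w @ [True]) u'"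
  by (cases a) (auto dest: prefix_snoc_eq)

lemma leaf_below_inner_has_child:
  "v \<in> inners T \<Longrightarrow> u \<in> leaves T \<Longrightarrow> prefix v u \<Longrightarrow> \<exists>x. prefix (v @ [x]) u"
proof (induction T arbitrary: v u)
  case (Node l r)
  show ?case
  proof (cases v)
    case Nil
    with Node.prems show ?thesis by auto
  next
    case (Cons y v')
    with Node show ?thesis by (cases y) auto
  qed
qed simp

lemma leaf_below_inner_cases:
  assumes "v \<in> inners T" "u \<in> leaves T" "prefix v u"
  shows "prefix (v @ [x]) u \<or> prefix (v @ [\<not> x]) u"
proof -
  obtain y where "prefix (v @ [y]) u" using leaf_below_inner_has_child[OF assms] by blast
  then show ?thesis by (cases "x = y") auto
qed

lemma leaves_prefix_eq: "u \<in> leaves T \<Longrightarrow> u' \<in> leaves T \<Longrightarrow> prefix u u' \<Longrightarrow> u = u'"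
  by (induction T arbitrary: u u') auto

lemma leaf_not_inner: "u \<in> leaves T \<Longrightarrow> u \<notin> inners T"
  by (induction T arbitrary: u) auto

lemma parent_inner: "v @ [x] \<in> inners T \<union> leaves T \<Longrightarrow> v \<in> inners T"
proof (induction T arbitrary: v)
  case (Node l r)
  then show ?case by (cases v) auto
qed simp

lemma finite_leaves: "finite (leaves T)"
  by (induction T) auto

lemma finite_inners: "finite (inners T)"
  by (induction T) auto

lemma leaves_nonempty: "leaves T \<noteq> {}"
  by (induction T) auto

section \<open>Periodically queried subtrees\<close>

definition subtree_queries_mod :: "(nat \<Rightarrow> bool list) \<Rightarrow> bool list \<Rightarrow> nat \<Rightarrow> nat \<Rightarrow> bool" where
  "subtree_queries_mod X w p r \<longleftrightarrow> r < p \<and> (\<forall>j. prefix w (X j) \<longleftrightarrow> j mod p = r)"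

definition infinitely_queried :: "(nat \<Rightarrow> bool list) \<Rightarrow> bool list \<Rightarrow> bool" where
  "infinitely_queried X w \<longleftrightarrow> (\<forall>i. \<exists>j>i. prefix w (X j))"

lemma infinitely_queried_append: "infinitely_queried X (w @ q) \<Longrightarrow> infinitely_queried X w"
  unfolding infinitely_queried_def using append_prefixD by blast

lemma consec_unique: "consec X w i j \<Longrightarrow> consec X w i j' \<Longrightarrow> j = j'"
  unfolding consec_def by (metis linorder_neqE_nat)

lemma infinitely_queried_consec:
  assumes "infinitely_queried X w" "prefix w (X i)"
  shows "\<exists>j. consec X w i j"
proof -
  define j where "j = (LEAST j. i < j \<and> prefix w (X j))"
  obtain j0 where "i < j0 \<and> prefix w (X j0)"
    using assms(1) unfolding infinitely_queried_def by blast
  then have "i < j \<and> prefix w (X j)" unfolding j_def by (rule LeastI)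
  moreover have "\<forall>k. i < k \<and> k < j \<longrightarrow> \<not> prefix w (X k)"
    unfolding j_def using not_less_Least by blast
  ultimately show ?thesis using assms(2) unfolding consec_def by blast
qed

lemma consec_restrict:
  "consec X v i j \<Longrightarrow> prefix (v @ q) (X i) \<Longrightarrow> prefix (v @ q) (X j) \<Longrightarrow> consec X (v @ q) i j"
  unfolding consec_def using append_prefixD by blast

lemma consec_restrict_skip:
  assumes "consec X v i j" "consec X v j k"
    and "prefix (v @ q) (X i)" "\<not> prefix (v @ q) (X j)" "prefix (v @ q) (X k)"
  shows "consec X (v @ q) i k"
  using assms unfolding consec_def by (metis append_prefixD linorder_neqE_nat order.strict_trans)

lemma subtree_queries_mod_consec:
  assumes "subtree_queries_mod X v p r" "prefix v (X i)"
  shows "consec X v i (i + p)"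
proof -
  have iff: "\<And>j. prefix v (X j) \<longleftrightarrow> j mod p = r" and "0 < p"
    using assms(1) unfolding subtree_queries_mod_def by auto
  have "\<not> prefix v (X t)" if "i < t" "t < i + p" for t
  proof
    assume "prefix v (X t)"
    then have "t mod p = i mod p" using assms(2) iff by simp
    then have "p dvd t - i" using that by (simp add: mod_eq_dvd_iff_nat)
    then show False using that by (simp add: nat_dvd_not_less)
  qed
  then show ?thesis using assms(2) iff \<open>0 < p\<close> unfolding consec_def by simp
qed

lemma subtree_queries_mod_infinitely_queried:
  "subtree_queries_mod X v p r \<Longrightarrow> infinitely_queried X v"
  unfolding subtree_queries_mod_def infinitely_queried_def
proof (intro allI)
  fix i assume v: "r < p \<and> (\<forall>j. prefix v (X j) \<longleftrightarrow> j mod p = r)"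
  then have "1 * Suc i \<le> p * Suc i" by (intro mult_le_mono1) simp
  then have "i < r + p * Suc i" by simp
  moreover have "prefix v (X (r + p * Suc i))" using v by (simp del: mult_Suc_right)
  ultimately show "\<exists>j>i. prefix v (X j)" by blast
qed

lemma subtree_queries_mod_refine:
  assumes v: "subtree_queries_mod X v p r" and s: "s < m"
    and step: "\<And>i j. consec X v i j \<Longrightarrow> c (X j) = Suc (c (X i)) mod m"
    and phase: "\<And>j. prefix v (X j) \<Longrightarrow> prefix (v @ q) (X j) \<longleftrightarrow> c (X j) mod m = s"
  shows "\<exists>r'. subtree_queries_mod X (v @ q) (m * p) r'"
proof -
  have iff: "\<And>j. prefix v (X j) \<longleftrightarrow> j mod p = r" and "r < p"
    using v unfolding subtree_queries_mod_def by auto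
  have on_v: "prefix v (X (r + k * p))" for k using iff \<open>r < p\<close> by simp
  have phase_cycles: "c (X (r + k * p)) mod m = (c (X r) + k) mod m" for k
  proof (induction k)
    case (Suc k)
    have "consec X v (r + k * p) (r + Suc k * p)"
      using subtree_queries_mod_consec[OF v on_v] by (simp add: algebra_simps)
    then have "c (X (r + Suc k * p)) = Suc (c (X (r + k * p))) mod m" by (rule step)
    then show ?case using Suc.IH by (metis add_Suc_right mod_Suc_eq mod_mod_trivial)
  qed simp
  have below_q: "prefix (v @ q) (X j) \<longleftrightarrow> j mod p = r \<and> (c (X r) + j div p) mod m = s" for j
  proof (cases "j mod p = r")
    case True
    then have "j = r + j div p * p" by (metis div_mult_mod_eq add.commute)
    then show ?thesis using phase[OF on_v] phase_cycles True by metis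
  next
    case False
    then show ?thesis using iff append_prefixD by blast
  qed
  obtain r' where "r' < m * p" "\<forall>j. (j mod p = r \<and> (c (X r) + j div p) mod m = s) \<longleftrightarrow> j mod (m * p) = r'"
    using mod_mult_residue_exists[OF \<open>r < p\<close> s] by blast
  then have "subtree_queries_mod X (v @ q) (m * p) r'"
    unfolding subtree_queries_mod_def using below_q by blast
  then show ?thesis ..
qed

lemma leaf_query_iff:
  assumes "query_seq T X" "u \<in> leaves T"
  shows "X j = u \<longleftrightarrow> prefix u (X j)"
proof
  assume "prefix u (X j)"
  then show "X j = u" using leaves_prefix_eq[OF assms(2)] assms(1) unfolding query_seq_def by metis
qed auto

lemma once_every_if_subtree_queries_mod:
  assumes "query_seq T X" "u \<in> leaves T" "subtree_queries_mod X u p r"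
  shows "once_every X u p"
proof -
  have "r < p" and "\<And>j. X j = u \<longleftrightarrow> j mod p = r"
    using assms(3) leaf_query_iff[OF assms(1,2)] unfolding subtree_queries_mod_def by auto
  then show ?thesis unfolding once_every_def using card_residue_window by presburger
qed

lemma bounded_periodic_iff:
  assumes "0 < (n::nat)"
  shows "(\<forall>k i. i < k * n \<longrightarrow> X i = X (i mod n)) \<longleftrightarrow> (\<forall>i. X i = X (i mod n))"
proof -
  have "i < Suc i * n" for i
  proof -
    have "Suc i * 1 \<le> Suc i * n" using assms by (intro mult_le_mono2) simp
    then show ?thesis by simp
  qed
  then show ?thesis by blast
qed

lemma atomic_length_eq_Lcm:
  assumes q: "query_seq T X" and per: "\<And>u. u \<in> leaves T \<Longrightarrow> subtree_queries_mod X u (P u) (r u)"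
  shows "atomic_length X = Lcm (P ` leaves T)"
proof -
  define L where "L = Lcm (P ` leaves T)"
  have res: "\<And>u j. u \<in> leaves T \<Longrightarrow> X j = u \<longleftrightarrow> j mod P u = r u" and r: "\<And>u. u \<in> leaves T \<Longrightarrow> r u < P u"
    using per leaf_query_iff[OF q] unfolding subtree_queries_mod_def by auto
  have leaf: "\<And>i. X i \<in> leaves T" using q unfolding query_seq_def by simp
  have "0 \<notin> P ` leaves T" using r by fastforce
  then have L: "0 < L" unfolding L_def by (simp add: finite_leaves Nat.neq0_conv[symmetric])
  have periodic: "X i = X (i mod L)" for i
  proof -
    define u where "u = X i"
    have u: "u \<in> leaves T" using leaf u_def by simp
    then have "P u dvd L" unfolding L_def by (simp add: dvd_Lcm)
    then have "(i mod L) mod P u = i mod P u" by (rule mod_mod_cancel)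
    then show ?thesis using res[OF u, of i] res[OF u, of "i mod L"] u_def by simp
  qed
  have least: "L dvd n" if "0 < n" "\<forall>i. X i = X (i mod n)" for n
    unfolding L_def
  proof (rule Lcm_least, clarify)
    fix u assume u: "u \<in> leaves T"
    have "X (r u + n) = X (r u)" using that(2) by (metis mod_add_self2)
    moreover have "X (r u) = u" using res[OF u] r[OF u] by simp
    ultimately have "(r u + n) mod P u = r u" using res[OF u, of "r u + n"] by simp
    then show "P u dvd n" using mod_eq_dvd_iff_nat[of "r u" "r u + n" "P u"] r[OF u] by simp
  qed
  have "atomic_length X = L" unfolding atomic_length_def
  proof (rule Least_equality)
    show "0 < L \<and> (\<forall>k i. i < k * L \<longrightarrow> X i = X (i mod L))"
      using L periodic bounded_periodic_iff[OF L] by simp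
    fix n assume n: "0 < n \<and> (\<forall>k i. i < k * n \<longrightarrow> X i = X (i mod n))"
    then have "L dvd n" using least bounded_periodic_iff[of n X] by simp
    then show "L \<le> n" using n by (simp add: dvd_imp_le)
  qed
  then show ?thesis unfolding L_def .
qed

section \<open>Strongly and weakly stable nodes\<close>

definition weakly_stable_towards :: "fbt \<Rightarrow> (nat \<Rightarrow> bool list) \<Rightarrow> bool list \<Rightarrow> bool \<Rightarrow> bool" where
  "weakly_stable_towards T X v d \<longleftrightarrow>
     v @ [d] \<in> inners T \<and> cyclic3 X v [d, d] [d, \<not> d] [\<not> d]"

lemma weakly_stable_node_iff: "weakly_stable_node T X v \<longleftrightarrow> (\<exists>d. weakly_stable_towards T X v d)"
  unfolding weakly_stable_node_def weakly_stable_left_def weakly_stable_right_def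
    weakly_stable_towards_def by (auto simp: ex_bool_eq)

lemma weakly_stable_towards_inner: "weakly_stable_towards T X v d \<Longrightarrow> v \<in> inners T"
  unfolding weakly_stable_towards_def using parent_inner by blast

definition weak_phase :: "bool list \<Rightarrow> bool \<Rightarrow> bool list \<Rightarrow> nat" where
  "weak_phase v d u = (if prefix (v @ [d, d]) u then 0 else if prefix (v @ [d, \<not> d]) u then 1 else 2)"

lemma weak_phase_0_iff: "weak_phase v d u = 0 \<longleftrightarrow> prefix (v @ [d, d]) u"
  unfolding weak_phase_def by simp

lemma weak_phase_1_iff: "weak_phase v d u = 1 \<longleftrightarrow> prefix (v @ [d, \<not> d]) u"
  unfolding weak_phase_def using prefix_snoc_eq[of "v @ [d]" d u "\<not> d"] by auto

lemma weak_phase_2_iff: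
  assumes "v @ [d] \<in> inners T" "u \<in> leaves T" "prefix v u"
  shows "weak_phase v d u = 2 \<longleftrightarrow> prefix (v @ [\<not> d]) u"
proof -
  have "v \<in> inners T" using assms(1) parent_inner by blast
  then have "prefix (v @ [d]) u \<or> prefix (v @ [\<not> d]) u"
    using leaf_below_inner_cases assms(2,3) by blast
  moreover have "prefix (v @ [d]) u \<Longrightarrow> prefix (v @ [d, d]) u \<or> prefix (v @ [d, \<not> d]) u"
    using leaf_below_inner_cases[OF assms(1,2)] by simp
  ultimately show ?thesis
    unfolding weak_phase_def using prefix_snoc_eq[of v _ u] append_prefixD[of "v @ [d]" _ u]
    by (cases d) auto
qed

lemma weak_phase_consec:
  assumes "query_seq T X" "weakly_stable_towards T X v d" "consec X v i j"
  shows "weak_phase v d (X j) = Suc (weak_phase v d (X i)) mod 3"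
proof -
  have inner: "v @ [d] \<in> inners T" and "cyclic3 X v [d, d] [d, \<not> d] [\<not> d]"
    using assms(2) unfolding weakly_stable_towards_def by auto
  then have pattern: "(prefix (v @ [d, d]) (X i) \<longrightarrow> prefix (v @ [d, \<not> d]) (X j)) \<and>
      (prefix (v @ [d, \<not> d]) (X i) \<longrightarrow> prefix (v @ [\<not> d]) (X j)) \<and>
      (prefix (v @ [\<not> d]) (X i) \<longrightarrow> prefix (v @ [d, d]) (X j))"
    using assms(3) unfolding cyclic3_def by blast
  have "X i \<in> leaves T" "X j \<in> leaves T" "prefix v (X i)" "prefix v (X j)"
    using assms(1,3) unfolding query_seq_def consec_def by auto
  then have two: "weak_phase v d (X i) = 2 \<longleftrightarrow> prefix (v @ [\<not> d]) (X i)"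
    "weak_phase v d (X j) = 2 \<longleftrightarrow> prefix (v @ [\<not> d]) (X j)"
    using weak_phase_2_iff[OF inner] by blast+
  have "weak_phase v d (X i) < 3" unfolding weak_phase_def by simp
  then consider "weak_phase v d (X i) = 0" | "weak_phase v d (X i) = 1" | "weak_phase v d (X i) = 2"
    by linarith
  then show ?thesis
  proof cases
    case 1
    with pattern have "weak_phase v d (X j) = 1" by (metis weak_phase_0_iff weak_phase_1_iff)
    with 1 show ?thesis by simp
  next
    case 2
    with pattern two have "weak_phase v d (X j) = 2" by (metis weak_phase_1_iff)
    with 2 show ?thesis by simp
  next
    case 3
    with pattern two have "weak_phase v d (X j) = 0" by (simp add: weak_phase_0_iff)
    with 3 show ?thesis by simp
  qed
qed

lemma subtree_queries_mod_strong_child: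
  assumes q: "query_seq T X" and v: "v \<in> inners T" "strongly_stable_node X v"
    and per: "subtree_queries_mod X v p r"
  shows "\<exists>r'. subtree_queries_mod X (v @ [x]) (2 * p) r'"
proof -
  define c :: "bool list \<Rightarrow> nat" where "c u = (if prefix (v @ [False]) u then 0 else 1)" for u
  have right_iff: "prefix (v @ [True]) (X j) \<longleftrightarrow> \<not> prefix (v @ [False]) (X j)" if "prefix v (X j)" for j
    using leaf_below_inner_cases[OF v(1), of "X j" True] q that prefix_snoc_eq[of v True "X j" False]
    unfolding query_seq_def by auto
  show ?thesis
  proof (rule subtree_queries_mod_refine[OF per, where c = c])
    show "(if x then 1 else 0) < (2::nat)" by simp
  next
    fix i j assume ij: "consec X v i j"
    then have "prefix v (X j)" unfolding consec_def by simp
    moreover have "prefix (v @ [False]) (X i) \<longleftrightarrow> prefix (v @ [True]) (X j)"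
      using v(2) ij unfolding strongly_stable_node_def by blast
    ultimately show "c (X j) = Suc (c (X i)) mod 2" using right_iff unfolding c_def by auto
  next
    fix j assume "prefix v (X j)"
    then show "prefix (v @ [x]) (X j) \<longleftrightarrow> c (X j) mod 2 = (if x then 1 else 0)"
      using right_iff unfolding c_def by (cases x) auto
  qed
qed

lemma subtree_queries_mod_weak_grandchild:
  assumes q: "query_seq T X" and w: "weakly_stable_towards T X v d"
    and per: "subtree_queries_mod X v p r" and g: "g \<in> {[d, d], [d, \<not> d], [\<not> d]}"
  shows "\<exists>r'. subtree_queries_mod X (v @ g) (3 * p) r'"
proof -
  define s :: nat where "s = (if g = [d, d] then 0 else if g = [d, \<not> d] then 1 else 2)"
  have inner: "v @ [d] \<in> inners T" using w unfolding weakly_stable_towards_def by simp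
  show ?thesis
  proof (rule subtree_queries_mod_refine[OF per, where c = "weak_phase v d" and s = s])
    show "s < 3" unfolding s_def by simp
  next
    fix i j assume "consec X v i j"
    then show "weak_phase v d (X j) = Suc (weak_phase v d (X i)) mod 3"
      by (rule weak_phase_consec[OF q w])
  next
    fix j assume "prefix v (X j)"
    then have "weak_phase v d (X j) = 2 \<longleftrightarrow> prefix (v @ [\<not> d]) (X j)"
      using weak_phase_2_iff[OF inner] q unfolding query_seq_def by blast
    moreover have "weak_phase v d (X j) < 3" unfolding weak_phase_def by simp
    ultimately show "prefix (v @ g) (X j) \<longleftrightarrow> weak_phase v d (X j) mod 3 = s"
      using g weak_phase_0_iff[of v d "X j"] weak_phase_1_iff[of v d "X j"] unfolding s_def
      by auto
  qed
qed

lemma weak_grandchild_infinitely_queried: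
  assumes q: "query_seq T X" and w: "weakly_stable_towards T X v d" and inf: "infinitely_queried X v"
  shows "infinitely_queried X (v @ [d, d])"
  unfolding infinitely_queried_def
proof
  fix i
  obtain i0 where "i < i0" "prefix v (X i0)" using inf unfolding infinitely_queried_def by blast
  then obtain i1 where i01: "consec X v i0 i1"
    using infinitely_queried_consec[OF inf] by blast
  then obtain i2 where i12: "consec X v i1 i2"
    using infinitely_queried_consec[OF inf] unfolding consec_def by blast
  have "weak_phase v d (X i0) < 3" unfolding weak_phase_def by simp
  then have "weak_phase v d (X i0) = 0 \<or> weak_phase v d (X i1) = 0 \<or> weak_phase v d (X i2) = 0"
    using weak_phase_consec[OF q w i01] weak_phase_consec[OF q w i12] by presburger
  moreover have "i < i1" "i < i2" using \<open>i < i0\<close> i01 i12 unfolding consec_def by simp_all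
  ultimately show "\<exists>j>i. prefix (v @ [d, d]) (X j)" using \<open>i < i0\<close> weak_phase_0_iff by blast
qed

lemma not_strongly_and_weakly_stable:
  assumes q: "query_seq T X" and inf: "infinitely_queried X v"
    and s: "strongly_stable_node X v" and w: "weakly_stable_towards T X v d"
  shows False
proof -
  obtain i where i: "prefix (v @ [d, d]) (X i)"
    using weak_grandchild_infinitely_queried[OF q w inf] unfolding infinitely_queried_def by blast
  then obtain j where ij: "consec X v i j"
    using infinitely_queried_consec[OF inf] append_prefixD by blast
  have "weak_phase v d (X i) = 0" using i weak_phase_0_iff by blast
  then have "weak_phase v d (X j) = 1" using weak_phase_consec[OF q w ij] by simp
  then have "prefix (v @ [d]) (X j)" using weak_phase_1_iff append_prefixD[of "v @ [d]"] by auto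
  moreover have "prefix (v @ [d]) (X i)" using i append_prefixD[of "v @ [d]"] by auto
  moreover have "prefix (v @ [False]) (X i) \<longleftrightarrow> prefix (v @ [True]) (X j)"
    using s ij unfolding strongly_stable_node_def by blast
  ultimately show False by (cases d) (auto dest: prefix_snoc_eq)
qed

lemma favored_child_consec:
  assumes q: "query_seq T X" and w: "weakly_stable_towards T X v d" and inf: "infinitely_queried X v"
    and ij: "consec X (v @ [d]) i j"
  shows "prefix (v @ [d, d]) (X i) \<and> prefix (v @ [d, \<not> d]) (X j) \<or>
         prefix (v @ [d, \<not> d]) (X i) \<and> prefix (v @ [d, d]) (X j)"
proof -
  have inner: "v @ [d] \<in> inners T" using w unfolding weakly_stable_towards_def by simp
  have leaf: "\<And>k. X k \<in> leaves T" using q unfolding query_seq_def by simp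
  have i: "prefix (v @ [d]) (X i)" using ij unfolding consec_def by simp
  then obtain i' where ii': "consec X v i i'"
    using infinitely_queried_consec[OF inf] append_prefixD by blast
  have phase_i': "weak_phase v d (X i') = Suc (weak_phase v d (X i)) mod 3"
    using weak_phase_consec[OF q w ii'] .
  from leaf_below_inner_cases[OF inner leaf i, of d]
  consider "prefix (v @ [d, d]) (X i)" | "prefix (v @ [d, \<not> d]) (X i)" by auto
  then show ?thesis
  proof cases
    case 1
    then have "weak_phase v d (X i) = 0" using weak_phase_0_iff by blast
    then have "weak_phase v d (X i') = 1" using phase_i' by simp
    then have "prefix (v @ [d, \<not> d]) (X i')" using weak_phase_1_iff by blast
    then have "consec X (v @ [d]) i i'" using consec_restrict[OF ii' i prefix_snoc_snocD] by blast
    then show ?thesis using 1 \<open>prefix (v @ [d, \<not> d]) (X i')\<close> consec_unique[OF ij] by blast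
  next
    case 2
    then have "weak_phase v d (X i) = 1" using weak_phase_1_iff by blast
    then have "weak_phase v d (X i') = 2" using phase_i' by simp
    then have "prefix (v @ [\<not> d]) (X i')"
      using weak_phase_2_iff[OF inner leaf] ii' unfolding consec_def by blast
    then have not_i': "\<not> prefix (v @ [d]) (X i')" by (auto dest: prefix_snoc_eq)
    obtain i'' where i'i'': "consec X v i' i''"
      using infinitely_queried_consec[OF inf] ii' unfolding consec_def by blast
    have "weak_phase v d (X i'') = 0"
      using weak_phase_consec[OF q w i'i''] \<open>weak_phase v d (X i') = 2\<close> by simp
    then have "prefix (v @ [d, d]) (X i'')" using weak_phase_0_iff by blast
    then have "consec X (v @ [d]) i i''"
      using consec_restrict_skip[OF ii' i'i'' i not_i' prefix_snoc_snocD] by blast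
    then show ?thesis using 2 \<open>prefix (v @ [d, d]) (X i'')\<close> consec_unique[OF ij] by blast
  qed
qed

lemma favored_child_strongly_stable:
  assumes "query_seq T X" "weakly_stable_towards T X v d" "infinitely_queried X v"
  shows "strongly_stable_node X (v @ [d]) \<and> infinitely_queried X (v @ [d])"
proof
  show "strongly_stable_node X (v @ [d])" unfolding strongly_stable_node_def
  proof (intro allI impI)
    fix i j assume "consec X (v @ [d]) i j"
    from favored_child_consec[OF assms this]
    show "prefix ((v @ [d]) @ [False]) (X i) \<longleftrightarrow> prefix ((v @ [d]) @ [True]) (X j)"
      using prefix_alternate[of "v @ [d]" d] prefix_alternate[of "v @ [d]" "\<not> d"] by auto
  qed
  have "infinitely_queried X ((v @ [d]) @ [d])"
    using weak_grandchild_infinitely_queried[OF assms] by simp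
  then show "infinitely_queried X (v @ [d])" by (rule infinitely_queried_append)
qed

section \<open>The periods of all nodes\<close>

definition favored_child :: "fbt \<Rightarrow> (nat \<Rightarrow> bool list) \<Rightarrow> bool list \<Rightarrow> bool" where
  "favored_child T X w \<longleftrightarrow> (\<exists>v d. w = v @ [d] \<and> weakly_stable_towards T X v d)"

text \<open>The second premise is what weak stability of the whole sequence amounts to, by the
  counting argument of weakly_stable_inner_cases below.\<close>

definition admissible_exponents :: "fbt \<Rightarrow> (nat \<Rightarrow> bool list) \<Rightarrow> nat \<Rightarrow> nat \<Rightarrow> bool" where
  "admissible_exponents T X a b \<longleftrightarrow>
     (strongly_stable T X \<longrightarrow> b = 0) \<and>
     ((\<forall>v \<in> inners T. weakly_stable_node T X v \<or> favored_child T X v) \<longrightarrow> a = 0)"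

definition periodic_node :: "fbt \<Rightarrow> (nat \<Rightarrow> bool list) \<Rightarrow> bool list \<Rightarrow> bool" where
  "periodic_node T X w \<longleftrightarrow>
     (\<exists>a b r. subtree_queries_mod X w (2 ^ a * 3 ^ b) r \<and> admissible_exponents T X a b)"

lemma periodic_node_root: "periodic_node T X []"
  unfolding periodic_node_def subtree_queries_mod_def admissible_exponents_def
  by (intro exI[of _ 0]) simp

lemma periodic_node_infinitely_queried: "periodic_node T X w \<Longrightarrow> infinitely_queried X w"
  unfolding periodic_node_def using subtree_queries_mod_infinitely_queried by blast

lemma periodic_node_weak_grandchild:
  assumes q: "query_seq T X" and w: "weakly_stable_towards T X v d" and per: "periodic_node T X v"
    and g: "g \<in> {[d, d], [d, \<not> d], [\<not> d]}"
  shows "periodic_node T X (v @ g)"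
proof -
  obtain a b r where ab: "subtree_queries_mod X v (2 ^ a * 3 ^ b) r" "admissible_exponents T X a b"
    using per unfolding periodic_node_def by blast
  obtain r' where "subtree_queries_mod X (v @ g) (2 ^ a * 3 ^ Suc b) r'"
    using subtree_queries_mod_weak_grandchild[OF q w ab(1) g] by (auto simp: ac_simps)
  moreover have "\<not> strongly_stable T X"
    using not_strongly_and_weakly_stable[OF q periodic_node_infinitely_queried[OF per] _ w]
      weakly_stable_towards_inner[OF w] unfolding strongly_stable_def by blast
  ultimately show ?thesis
    using ab(2) unfolding periodic_node_def admissible_exponents_def by blast
qed

lemma periodic_node_strong_child:
  assumes ms: "mixed_stable T X" and v: "v \<in> inners T" "\<not> weakly_stable_node T X v"
    "\<not> favored_child T X v" and per: "periodic_node T X v"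
  shows "periodic_node T X (v @ [x])"
proof -
  have q: "query_seq T X" and "strongly_stable_node X v"
    using ms v unfolding mixed_stable_def by auto
  obtain a b r where ab: "subtree_queries_mod X v (2 ^ a * 3 ^ b) r" "admissible_exponents T X a b"
    using per unfolding periodic_node_def by blast
  obtain r' where "subtree_queries_mod X (v @ [x]) (2 ^ Suc a * 3 ^ b) r'"
    using subtree_queries_mod_strong_child[OF q v(1) \<open>strongly_stable_node X v\<close> ab(1)]
    by (auto simp: ac_simps)
  then show ?thesis
    using ab(2) v unfolding periodic_node_def admissible_exponents_def by blast
qed

lemma periodic_node_child:
  assumes ms: "mixed_stable T X" and w: "v @ [x] \<in> inners T \<union> leaves T"
    and not_favored: "\<not> favored_child T X (v @ [x])"
    and parent: "\<not> favored_child T X v \<Longrightarrow> periodic_node T X v"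
    and grandparent: "\<And>g y. weakly_stable_towards T X g y \<Longrightarrow> v = g @ [y] \<Longrightarrow> periodic_node T X g"
  shows "periodic_node T X (v @ [x])"
proof -
  have q: "query_seq T X" using ms unfolding mixed_stable_def by simp
  have v: "v \<in> inners T" using w parent_inner by blast
  show ?thesis
  proof (cases "favored_child T X v")
    case True
    then obtain g y where gy: "v = g @ [y]" "weakly_stable_towards T X g y"
      unfolding favored_child_def by blast
    have "[y, x] \<in> {[y, y], [y, \<not> y], [\<not> y]}" by (cases x; cases y) auto
    then show ?thesis
      using periodic_node_weak_grandchild[OF q gy(2) grandparent[OF gy(2,1)]] gy(1) by simp
  next
    case False
    note per = parent[OF False]
    show ?thesis
    proof (cases "weakly_stable_node T X v")
      case True
      then obtain d where d: "weakly_stable_towards T X v d"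
        unfolding weakly_stable_node_iff by blast
      then have "x = (\<not> d)" using not_favored unfolding favored_child_def by (cases x) auto
      then show ?thesis using periodic_node_weak_grandchild[OF q d per] by simp
    next
      case not_weak: False
      show ?thesis by (rule periodic_node_strong_child[OF ms v not_weak \<open>\<not> favored_child T X v\<close> per])
    qed
  qed
qed

lemma periodic_or_favored_strongly_stable:
  assumes ms: "mixed_stable T X" and w: "w \<in> inners T \<union> leaves T"
  shows "(favored_child T X w \<longrightarrow> strongly_stable_node X w \<and> infinitely_queried X w) \<and>
         (\<not> favored_child T X w \<longrightarrow> periodic_node T X w)"
  using w
proof (induction "length w" arbitrary: w rule: less_induct)
  case less
  have q: "query_seq T X" using ms unfolding mixed_stable_def by simp
  have weak_periodic: "periodic_node T X g"
    if "weakly_stable_towards T X g e" "length g < length w" for g e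
  proof -
    have "g \<in> inners T" using weakly_stable_towards_inner[OF that(1)] .
    then have "(favored_child T X g \<longrightarrow> strongly_stable_node X g \<and> infinitely_queried X g) \<and>
        (\<not> favored_child T X g \<longrightarrow> periodic_node T X g)"
      using less.hyps[OF that(2)] by blast
    then show ?thesis using not_strongly_and_weakly_stable[OF q _ _ that(1)] by blast
  qed
  show ?case
  proof (cases w rule: rev_cases)
    case Nil
    then show ?thesis using periodic_node_root unfolding favored_child_def by simp
  next
    case (snoc v x)
    have "strongly_stable_node X w \<and> infinitely_queried X w" if "favored_child T X w"
    proof -
      from that obtain d where d: "weakly_stable_towards T X v d" "w = v @ [d]"
        unfolding favored_child_def snoc by blast
      then have "infinitely_queried X v"
        using weak_periodic[OF d(1)] periodic_node_infinitely_queried snoc by simp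
      then show ?thesis using favored_child_strongly_stable[OF q d(1)] d(2) by simp
    qed
    moreover have "periodic_node T X w" if "\<not> favored_child T X w"
    proof -
      have "v \<in> inners T" using less.prems snoc parent_inner by blast
      then show ?thesis
        using periodic_node_child[OF ms, of v x] less.prems that less.hyps[of v] weak_periodic snoc
        by simp
    qed
    ultimately show ?thesis by blast
  qed
qed

lemma favored_child_not_weakly_stable:
  assumes ms: "mixed_stable T X" and v: "favored_child T X v"
  shows "\<not> weakly_stable_node T X v"
proof -
  have "v \<in> inners T" using v unfolding favored_child_def weakly_stable_towards_def by auto
  then have "strongly_stable_node X v" "infinitely_queried X v"
    using periodic_or_favored_strongly_stable[OF ms] v by blast+
  moreover have "query_seq T X" using ms unfolding mixed_stable_def by simp
  ultimately show ?thesis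
    using not_strongly_and_weakly_stable unfolding weakly_stable_node_iff by blast
qed

lemma weakly_stable_inner_cases:
  assumes ms: "mixed_stable T X" and ws: "weakly_stable T X" and v: "v \<in> inners T"
  shows "weakly_stable_node T X v \<or> favored_child T X v"
proof -
  define W where "W = {v \<in> inners T. weakly_stable_node T X v}"
  define fav where "fav g = g @ [SOME d. weakly_stable_towards T X g d]" for g
  have fav: "weakly_stable_towards T X g (last (fav g))" if "g \<in> W" for g
    using that someI_ex[of "weakly_stable_towards T X g"]
    unfolding W_def fav_def weakly_stable_node_iff by auto
  have "fav ` W \<subseteq> inners T - W"
  proof
    fix w assume "w \<in> fav ` W"
    then obtain g where g: "g \<in> W" "w = fav g" by blast
    then have "favored_child T X w"
      using fav unfolding favored_child_def fav_def by fastforce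
    then show "w \<in> inners T - W"
      using favored_child_not_weakly_stable[OF ms] unfolding favored_child_def
        weakly_stable_towards_def W_def by auto
  qed
  moreover have "card (fav ` W) = card (inners T - W)"
  proof -
    have "inj_on fav W" unfolding fav_def by (rule inj_onI) simp
    moreover have "2 * card W = card (inners T)"
      using ws unfolding weakly_stable_def W_def by simp
    moreover have "card (inners T - W) = card (inners T) - card W"
      by (rule card_Diff_subset) (auto simp: W_def intro: finite_subset[OF _ finite_inners])
    ultimately show ?thesis by (simp add: card_image)
  qed
  ultimately have "fav ` W = inners T - W"
    by (intro card_subset_eq) (simp_all add: finite_inners)
  then show ?thesis
    using v fav unfolding W_def favored_child_def fav_def by auto
qed

theorem lemma1:
  fixes T :: fbt and X :: "nat \<Rightarrow> bool list"
  assumes "mixed_stable T X"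
  shows "\<exists>a b :: bool list \<Rightarrow> nat.
           (\<forall>u \<in> leaves T. once_every X u (2 ^ a u * 3 ^ b u)) \<and>
           atomic_length X = 2 ^ Max (a ` leaves T) * 3 ^ Max (b ` leaves T) \<and>
           (strongly_stable T X \<longrightarrow> (\<forall>u \<in> leaves T. b u = 0)) \<and>
           (weakly_stable T X \<longrightarrow> (\<forall>u \<in> leaves T. a u = 0))"
proof -
  have q: "query_seq T X" using assms unfolding mixed_stable_def by simp
  have "periodic_node T X u" if "u \<in> leaves T" for u
    using periodic_or_favored_strongly_stable[OF assms] that leaf_not_inner
    unfolding favored_child_def weakly_stable_towards_def by blast
  then obtain a b r where abr: "\<And>u. u \<in> leaves T \<Longrightarrow>
      subtree_queries_mod X u (2 ^ a u * 3 ^ b u) (r u) \<and> admissible_exponents T X (a u) (b u)"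
    unfolding periodic_node_def by metis
  have "atomic_length X = Lcm ((\<lambda>u. 2 ^ a u * 3 ^ b u) ` leaves T)"
    using atomic_length_eq_Lcm[OF q, of "\<lambda>u. 2 ^ a u * 3 ^ b u" r] abr by blast
  also have "\<dots> = 2 ^ Max (a ` leaves T) * 3 ^ Max (b ` leaves T)"
    by (rule Lcm_powers_two_three[OF finite_leaves leaves_nonempty])
  finally show ?thesis
    using abr once_every_if_subtree_queries_mod[OF q] weakly_stable_inner_cases[OF assms]
    unfolding admissible_exponents_def by blast
qed

end
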